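(* Let $V:\mathbb{R}^2\to[0,\infty)$ be Hölder continuous with compact support and $\int V=1$, and let $\tau>0$. For $\varepsilon\in(0,1)$ set $V^\varepsilon(x)=\varepsilon^{-2}V(x/\varepsilon)$ and $V_\varepsilon(x)=\varepsilon^{-2}|\log\varepsilon|^{-1}V(x/\varepsilon)$. For all sufficiently small $\varepsilon$ let $u^\varepsilon\in C^2(\mathbb{R}^2)$ be the unique function with $u^\varepsilon(x)=O(|\log|x||)$ as $|x|\to\infty$ satisfying $$u^\varepsilon(x)=\frac{\tau}{2\pi}\int_{\mathbb{R}^2}\log|x-y|\big[V_\varepsilon(y)u^\varepsilon(y)+V^\varepsilon(y)\big]dy,$$ and set $\Lambda_\varepsilon=\frac{\tau}{2\pi}\int_{\mathbb{R}^2}\big(V_\varepsilon u^\varepsilon+V^\varepsilon\big)dx$. Then $\Lambda_\varepsilon>0$ for all sufficiently small $\varepsilon$, and $\limsup_{\varepsilon\to0}\Lambda_\varepsilon\le1$.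
   Context: Existence and uniqueness of $u^\varepsilon$ for small $\varepsilon$ (in the class of $C^2$ functions with logarithmic growth) is part of the setting and is taken as given. *)

theory Defs
  imports "HOL-Analysis.Analysis" "HOL-Library.Landau_Symbols"
begin

definition holder_continuous :: "(real^2 \<Rightarrow> real) \<Rightarrow> bool" where
  "holder_continuous f \<longleftrightarrow>
     (\<exists>C \<alpha>. 0 < \<alpha> \<and> \<alpha> \<le> 1 \<and> (\<forall>x y. \<bar>f x - f y\<bar> \<le> C * dist x y powr \<alpha>))"

definition compact_support :: "(real^2 \<Rightarrow> real) \<Rightarrow> bool" where
  "compact_support f \<longleftrightarrow> compact (closure {x. f x \<noteq> 0})"

definition C2 :: "(real^2 \<Rightarrow> real) \<Rightarrow> bool" where
  "C2 f \<longleftrightarrow> (\<exists>Df :: real^2 \<Rightarrow> ((real^2) \<Rightarrow>\<^sub>L real).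
                \<exists>D2f :: real^2 \<Rightarrow> ((real^2) \<Rightarrow>\<^sub>L ((real^2) \<Rightarrow>\<^sub>L real)).
       (\<forall>x. (f has_derivative blinfun_apply (Df x)) (at x)) \<and>
       (\<forall>x. (Df has_derivative blinfun_apply (D2f x)) (at x)) \<and>
       continuous_on UNIV D2f)"

definition Vup :: "(real^2 \<Rightarrow> real) \<Rightarrow> real \<Rightarrow> real^2 \<Rightarrow> real" where
  "Vup V \<epsilon> x = V (x /\<^sub>R \<epsilon>) / \<epsilon>\<^sup>2"

definition Vlow :: "(real^2 \<Rightarrow> real) \<Rightarrow> real \<Rightarrow> real^2 \<Rightarrow> real" where
  "Vlow V \<epsilon> x = V (x /\<^sub>R \<epsilon>) / (\<epsilon>\<^sup>2 * \<bar>ln \<epsilon>\<bar>)"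

definition solves_eq :: "(real^2 \<Rightarrow> real) \<Rightarrow> real \<Rightarrow> real \<Rightarrow> (real^2 \<Rightarrow> real) \<Rightarrow> bool" where
  "solves_eq V \<tau> \<epsilon> w \<longleftrightarrow>
     (\<forall>x. w x = \<tau> / (2 * pi) *
        (\<integral>y. ln (norm (x - y)) * (Vlow V \<epsilon> y * w y + Vup V \<epsilon> y) \<partial>lborel))"

definition admissible :: "(real^2 \<Rightarrow> real) \<Rightarrow> bool" where
  "admissible w \<longleftrightarrow> C2 w \<and> w \<in> O[at_infinity](\<lambda>x. \<bar>ln (norm x)\<bar>)"

definition Lambda :: "(real^2 \<Rightarrow> real) \<Rightarrow> real \<Rightarrow> real \<Rightarrow> (real^2 \<Rightarrow> real) \<Rightarrow> real" where
  "Lambda V \<tau> \<epsilon> w = \<tau> / (2 * pi) * (\<integral>x. Vlow V \<epsilon> x * w x + Vup V \<epsilon> x \<partial>lborel)"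

end

theory Submission
  imports Defs
begin

(* Blow up at scale eps: put v(z) = u(eps z), L = |log eps| and h = V (v / L + 1), so that
   Lambda = a \<integral> h with a = tau / (2 pi), and on supp V \<subseteq> B(0, R) the equation reads
   v = - L Lambda + a (log|.| * h). As log is locally integrable, K = \<integral>_B(0, 2R) |log| is finite
   and the potential is bounded on supp V by a (max V) K (max |v| / L + 1); evaluating the equation
   where |v| is maximal and absorbing the max |v| / L term bounds it by 2 a (max V) K (|Lambda| + 1).
   Integrating h - V + Lambda V = V (a (log|.| * h)) / L against \<integral> V = 1 then yields
   |Lambda (1 + a) - a| = O((|Lambda| + 1) / L), so Lambda tends to a / (1 + a), which lies in (0, 1). *)

lemma nn_integral_lborel_affine:
  fixes f :: "'a::euclidean_space \<Rightarrow> ennreal" and c :: real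
  assumes [measurable]: "f \<in> borel_measurable borel" and c: "c \<noteq> 0"
  shows "(\<integral>\<^sup>+x. f x \<partial>lborel) = ennreal (\<bar>c\<bar> ^ DIM('a)) * (\<integral>\<^sup>+x. f (t + c *\<^sub>R x) \<partial>lborel)"
  by (subst lborel_affine[OF c, of t])
     (simp add: nn_integral_density nn_integral_distr nn_integral_cmult)

lemma lborel_integrable_affine:
  fixes f :: "'a::euclidean_space \<Rightarrow> 'b::{banach, second_countable_topology}"
  assumes f: "integrable lborel f" and c: "c \<noteq> 0"
  shows "integrable lborel (\<lambda>x. f (t + c *\<^sub>R x))"
  using f f[THEN borel_measurable_integrable] unfolding integrable_iff_bounded
  by (subst (asm) nn_integral_lborel_affine[where c=c and t=t]) (auto simp: ennreal_mult_less_top c)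

lemma lborel_integrable_affine_iff:
  fixes f :: "'a::euclidean_space \<Rightarrow> 'b::{banach, second_countable_topology}"
  assumes c: "c \<noteq> 0"
  shows "integrable lborel (\<lambda>x. f (t + c *\<^sub>R x)) \<longleftrightarrow> integrable lborel f"
  using lborel_integrable_affine[of f c t]
    lborel_integrable_affine[of "\<lambda>x. f (t + c *\<^sub>R x)" "1 / c" "- t /\<^sub>R c"] c
  by (auto simp: algebra_simps)

lemma lborel_integral_affine:
  fixes f :: "'a::euclidean_space \<Rightarrow> 'b::{banach, second_countable_topology}" and c :: real
  assumes c: "c \<noteq> 0"
  shows "(\<integral>x. f x \<partial>lborel) = \<bar>c\<bar> ^ DIM('a) *\<^sub>R (\<integral>x. f (t + c *\<^sub>R x) \<partial>lborel)"
proof cases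
  assume f[measurable]: "integrable lborel f"
  then show ?thesis
    using c f[THEN borel_measurable_integrable] lborel_integrable_affine[OF f c, of t]
    by (subst lborel_affine[OF c, of t]) (simp add: integral_density integral_distr)
next
  assume "\<not> integrable lborel f"
  with c show ?thesis
    by (simp add: lborel_integrable_affine_iff not_integrable_integral_eq)
qed

lemma continuous_on_holder_continuous:
  assumes "holder_continuous f"
  shows "continuous_on UNIV f"
proof -
  obtain C \<alpha> where \<alpha>: "0 < \<alpha>" and H: "\<And>x y. \<bar>f x - f y\<bar> \<le> C * dist x y powr \<alpha>"
    using assms unfolding holder_continuous_def by blast
  have "isCont f x" for x
  proof -
    have "((\<lambda>y. dist y x powr \<alpha>) \<longlongrightarrow> 0) (at x)"
      using \<alpha> by (intro tendsto_zero_powrI tendsto_dist_iff[THEN iffD1] tendsto_ident_at) auto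
    then have "((\<lambda>y. C * dist y x powr \<alpha>) \<longlongrightarrow> 0) (at x)"
      using tendsto_mult_right_zero by blast
    then have "((\<lambda>y. f y - f x) \<longlongrightarrow> 0) (at x)"
      by (rule Lim_null_comparison[rotated]) (simp add: H)
    then show ?thesis
      unfolding isCont_def by (rule LIM_zero_cancel)
  qed
  then show ?thesis
    by (simp add: continuous_at_imp_continuous_on)
qed

lemma C2_imp_continuous_on:
  assumes "C2 f"
  shows "continuous_on UNIV f"
  using assms unfolding C2_def
  by (metis continuous_at_imp_continuous_on has_derivative_continuous)

lemma compact_support_vanishes_outside_cball:
  assumes "compact_support f"
  obtains R where "0 < R" and "\<And>x. x \<notin> cball 0 R \<Longrightarrow> f x = 0"
proof -
  have "bounded (closure {x. f x \<noteq> 0})"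
    using assms unfolding compact_support_def by (rule compact_imp_bounded)
  then obtain R where "0 < R" and R: "\<And>x. x \<in> closure {x. f x \<noteq> 0} \<Longrightarrow> norm x \<le> R"
    unfolding bounded_pos by blast
  moreover have "f x = 0" if "x \<notin> cball 0 R" for x
  proof -
    have "x \<notin> closure {x. f x \<noteq> 0}"
      using that R by force
    then show ?thesis
      using closure_subset[of "{x. f x \<noteq> 0}"] by blast
  qed
  ultimately show ?thesis
    using that by blast
qed

lemma compact_support_bounded_above:
  assumes "compact_support f" and "continuous_on UNIV f"
  obtains M where "\<And>x. f x \<le> M"
proof -
  obtain R where R: "\<And>x. x \<notin> cball 0 R \<Longrightarrow> f x = 0"
    using compact_support_vanishes_outside_cball[OF assms(1)] by blast
  have "bounded (f ` cball 0 R)"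
    using assms(2)
    by (intro compact_imp_bounded compact_continuous_image) (auto intro: continuous_on_subset)
  then obtain B where B: "\<forall>y \<in> f ` cball 0 R. norm y \<le> B"
    unfolding bounded_iff by blast
  have "f x \<le> max B 0" for x
  proof (cases "x \<in> cball 0 R")
    case True
    then have "\<bar>f x\<bar> \<le> B"
      using B by simp
    then show ?thesis
      by linarith
  qed (simp add: R)
  then show ?thesis
    using that by blast
qed

(* Near the origin |ln |w|| is at most the number of balls of radius exp (- k) containing w,
   and the volumes exp (- k DIM('a)) of these balls are summable. *)
lemma abs_ln_norm_indicator_le:
  fixes w :: "'a::real_normed_vector"
  shows "ennreal \<bar>indicator (cball 0 r) w * ln (norm w)\<bar>
    \<le> ennreal (ln (max r 1)) * indicator (cball 0 r) w + (\<Sum>k. indicator (ball 0 (exp (- real k))) w)"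
proof (cases "w \<in> cball 0 r")
  case w: True
  consider "1 \<le> norm w" | "w = 0" | "0 < norm w" "norm w < 1"
    by fastforce
  then show ?thesis
  proof cases
    case 1
    then have "\<bar>ln (norm w)\<bar> \<le> ln (max r 1)"
      using w by (auto intro!: ln_mono)
    then show ?thesis
      using w by (simp add: ennreal_leI add_increasing2)
  next
    case 2
    then show ?thesis by simp
  next
    case 3
    define N where "N = nat \<lceil>- ln (norm w)\<rceil>"
    have "w \<in> ball 0 (exp (- real k))" if "k < N" for k
    proof -
      have "ln (norm w) < - real k"
        using that unfolding N_def by linarith
      then have "norm w < exp (- real k)"
        using 3 by (metis exp_less_mono exp_ln)
      then show ?thesis
        by simp
    qed
    then have N_le: "ennreal (real N) \<le> (\<Sum>k. indicator (ball 0 (exp (- real k))) w)"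
      using sum_le_suminf[of "\<lambda>k. indicator (ball 0 (exp (- real k))) w :: ennreal" "{..<N}"]
      by (simp add: ennreal_of_nat_eq_real_of_nat)
    have "ennreal \<bar>indicator (cball 0 r) w * ln (norm w)\<bar> \<le> ennreal (real N)"
      using w 3 unfolding N_def by (intro ennreal_leI) simp
    also note N_le
    finally show ?thesis
      by (simp add: add_increasing)
  qed
qed simp

lemma integrable_ln_norm_cball:
  "integrable lborel (\<lambda>w::'a::euclidean_space. indicator (cball 0 r) w * ln (norm w))"
proof (rule integrableI_bounded)
  show "(\<lambda>w::'a. indicator (cball 0 r) w * ln (norm w)) \<in> borel_measurable lborel"
    by (intro borel_measurable_times borel_measurable_indicator borel_measurable_ln
        borel_measurable_norm) auto
  have ball_meas:
    "(indicator (ball (0::'a) (exp (- real k))) :: 'a \<Rightarrow> ennreal) \<in> borel_measurable lborel" for k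
    by (intro borel_measurable_indicator) auto
  define n where "n = DIM('a)"
  have ball_exp: "emeasure lborel (ball (0::'a) (exp (- real k)))
      = ennreal (exp (- real n) ^ k) * emeasure lborel (ball (0::'a) 1)" for k
    using emeasure_lebesgue_ball_conv_unit_ball[of "exp (- real k)" "0::'a"]
    by (simp add: n_def exp_of_nat_mult[symmetric] power_mult[symmetric] mult.commute)
  have "summable (\<lambda>k. exp (- real n) ^ k)"
    using DIM_positive[where 'a='a] by (intro summable_geometric) (simp add: n_def)
  then have sum_fin: "(\<Sum>k. ennreal (exp (- real n) ^ k)) < \<infinity>"
    by (simp add: suminf_ennreal2)
  have "(\<integral>\<^sup>+w. ennreal (norm (indicator (cball (0::'a) r) w * ln (norm w))) \<partial>lborel)
     \<le> (\<integral>\<^sup>+w. ennreal (ln (max r 1)) * indicator (cball (0::'a) r) w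
            + (\<Sum>k. indicator (ball 0 (exp (- real k))) w) \<partial>lborel)"
    by (intro nn_integral_mono) (simp add: abs_ln_norm_indicator_le)
  also have "\<dots> = ennreal (ln (max r 1)) * emeasure lborel (cball (0::'a) r)
      + (\<Sum>k. emeasure lborel (ball (0::'a) (exp (- real k))))"
    using nn_integral_suminf[OF ball_meas] ball_meas
    by (subst nn_integral_add)
      (auto intro!: borel_measurable_suminf_order borel_measurable_times_ennreal
        borel_measurable_indicator simp: nn_integral_cmult_indicator)
  also have "\<dots> = ennreal (ln (max r 1)) * emeasure lborel (cball (0::'a) r)
      + (\<Sum>k. ennreal (exp (- real n) ^ k)) * emeasure lborel (ball (0::'a) 1)"
    by (simp add: ball_exp)
  also have "\<dots> < \<infinity>"
    using sum_fin emeasure_lborel_ball_finite[of "0::'a" 1]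
      emeasure_lborel_cball_finite[of "0::'a" r]
    by (simp add: ennreal_mult_less_top)
  finally show
    "(\<integral>\<^sup>+w. ennreal (norm (indicator (cball (0::'a) r) w * ln (norm w))) \<partial>lborel) < \<infinity>" .
qed

lemma log_potential_bounded:
  fixes h :: "'a::euclidean_space \<Rightarrow> real" and z :: 'a
  assumes h_meas [measurable]: "h \<in> borel_measurable borel"
    and h_le: "\<And>y. \<bar>h y\<bar> \<le> M * indicator (cball 0 R) y"
    and z: "norm z \<le> R"
  shows "integrable lborel (\<lambda>y. ln (norm (z - y)) * h y)"
    and "\<bar>\<integral>y. ln (norm (z - y)) * h y \<partial>lborel\<bar>
           \<le> M * (\<integral>w. \<bar>indicator (cball (0::'a) (2 * R)) w * ln (norm w)\<bar> \<partial>lborel)"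
proof -
  define G where "G w = \<bar>indicator (cball 0 (2 * R)) w * ln (norm w)\<bar>" for w :: 'a
  have M: "0 \<le> M"
    using h_le[of z] z by simp
  have G_int: "integrable lborel (\<lambda>y. G (z - y))"
    using lborel_integrable_affine[OF integrable_abs[OF integrable_ln_norm_cball],
        where c="-1" and t=z]
    by (simp add: G_def)
  have bound: "\<bar>ln (norm (z - y)) * h y\<bar> \<le> M * G (z - y)" for y
  proof (cases "y \<in> cball 0 R")
    case True
    then have "norm (z - y) \<le> 2 * R"
      using z norm_triangle_ineq4[of z y] by simp
    then show ?thesis
      using h_le[of y] True by (simp add: G_def abs_mult mult.commute mult_right_mono)
  next
    case False
    then show ?thesis
      using h_le[of y] M by (simp add: G_def)
  qed
  show integrable: "integrable lborel (\<lambda>y. ln (norm (z - y)) * h y)"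
    by (rule Bochner_Integration.integrable_bound[OF integrable_mult_right[OF G_int, of M]])
      (use bound M in \<open>auto simp: G_def abs_mult\<close>)
  have "\<bar>\<integral>y. ln (norm (z - y)) * h y \<partial>lborel\<bar> \<le> (\<integral>y. M * G (z - y) \<partial>lborel)"
    using integrable G_int bound by (intro integral_abs_bound_integral) auto
  also have "\<dots> = M * (\<integral>w. G w \<partial>lborel)"
    using lborel_integral_affine[where f=G and c="-1" and t=z] by simp
  finally show "\<bar>\<integral>y. ln (norm (z - y)) * h y \<partial>lborel\<bar>
      \<le> M * (\<integral>w. \<bar>indicator (cball (0::'a) (2 * R)) w * ln (norm w)\<bar> \<partial>lborel)"
    by (simp add: G_def)
qed

definition rescaled_density ::
    "(real^2 \<Rightarrow> real) \<Rightarrow> real \<Rightarrow> (real^2 \<Rightarrow> real) \<Rightarrow> real^2 \<Rightarrow> real" where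
  "rescaled_density V \<epsilon> u z = V z * (u (\<epsilon> *\<^sub>R z) / \<bar>ln \<epsilon>\<bar> + 1)"

lemma rescaled_density_eq:
  assumes "\<epsilon> \<noteq> 0"
  shows "\<epsilon>\<^sup>2 * (Vlow V \<epsilon> (\<epsilon> *\<^sub>R z) * u (\<epsilon> *\<^sub>R z) + Vup V \<epsilon> (\<epsilon> *\<^sub>R z))
    = rescaled_density V \<epsilon> u z"
  using assms by (simp add: rescaled_density_def Vlow_def Vup_def field_simps)

lemma Lambda_eq_integral_rescaled_density:
  assumes "\<epsilon> \<noteq> 0"
  shows "Lambda V \<tau> \<epsilon> u = \<tau> / (2 * pi) * (\<integral>z. rescaled_density V \<epsilon> u z \<partial>lborel)"
  using lborel_integral_affine[OF assms, where t=0
      and f="\<lambda>x. Vlow V \<epsilon> x * u x + Vup V \<epsilon> x"] assms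
  by (simp add: Lambda_def rescaled_density_eq[symmetric])

lemma solves_eq_rescaled:
  fixes z :: "real^2"
  assumes sol: "solves_eq V \<tau> \<epsilon> u" and \<epsilon>: "0 < \<epsilon>"
    and h_int: "integrable lborel (rescaled_density V \<epsilon> u)"
    and potential_int: "integrable lborel (\<lambda>y. ln (norm (z - y)) * rescaled_density V \<epsilon> u y)"
  shows "u (\<epsilon> *\<^sub>R z) = ln \<epsilon> * Lambda V \<tau> \<epsilon> u
           + \<tau> / (2 * pi) * (\<integral>y. ln (norm (z - y)) * rescaled_density V \<epsilon> u y \<partial>lborel)"
proof -
  define h where "h = rescaled_density V \<epsilon> u"
  have [measurable]: "h \<in> borel_measurable borel"
    using h_int unfolding h_def by measurable
  have "(\<integral>y. ln (norm (\<epsilon> *\<^sub>R z - y)) * (Vlow V \<epsilon> y * u y + Vup V \<epsilon> y) \<partial>lborel)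
      = ln \<epsilon> * (\<integral>y. h y \<partial>lborel) + (\<integral>y. ln (norm (z - y)) * h y \<partial>lborel)"
  proof -
    have "(\<integral>y. ln (norm (\<epsilon> *\<^sub>R z - y)) * (Vlow V \<epsilon> y * u y + Vup V \<epsilon> y) \<partial>lborel)
        = (\<integral>y. ln (norm (\<epsilon> *\<^sub>R z - \<epsilon> *\<^sub>R y)) * h y \<partial>lborel)"
      using lborel_integral_affine[where t=0 and c=\<epsilon>
          and f="\<lambda>y. ln (norm (\<epsilon> *\<^sub>R z - y)) * (Vlow V \<epsilon> y * u y + Vup V \<epsilon> y)"] \<epsilon>
      by (simp add: h_def rescaled_density_eq[symmetric] mult_ac)
    also have "\<dots> = (\<integral>y. ln \<epsilon> * h y + ln (norm (z - y)) * h y \<partial>lborel)"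
    proof (rule integral_cong_AE)
      show "AE y in lborel.
          ln (norm (\<epsilon> *\<^sub>R z - \<epsilon> *\<^sub>R y)) * h y = ln \<epsilon> * h y + ln (norm (z - y)) * h y"
        using AE_lborel_singleton[of z]
      proof eventually_elim
        case (elim y)
        have "norm (\<epsilon> *\<^sub>R z - \<epsilon> *\<^sub>R y) = \<epsilon> * norm (z - y)"
          using \<epsilon> by (simp flip: scaleR_right_diff_distrib)
        then show ?case
          using \<epsilon> elim by (simp add: ln_mult distrib_right)
      qed
    qed measurable
    also have "\<dots> = ln \<epsilon> * (\<integral>y. h y \<partial>lborel) + (\<integral>y. ln (norm (z - y)) * h y \<partial>lborel)"
      using h_int potential_int by (simp add: h_def)
    finally show ?thesis .
  qed
  moreover have "u (\<epsilon> *\<^sub>R z) = \<tau> / (2 * pi) *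
      (\<integral>y. ln (norm (\<epsilon> *\<^sub>R z - y)) * (Vlow V \<epsilon> y * u y + Vup V \<epsilon> y) \<partial>lborel)"
    using sol unfolding solves_eq_def by blast
  ultimately show ?thesis
    using \<epsilon> by (simp add: Lambda_eq_integral_rescaled_density h_def distrib_left)
qed

lemma pos_le_one_if_near_ratio:
  fixes \<Lambda> a c L :: real
  assumes near: "\<bar>\<Lambda> * (1 + a) - a\<bar> \<le> 2 * a\<^sup>2 * c / L * (\<bar>\<Lambda>\<bar> + 1)"
    and a: "0 < a" and c: "0 \<le> c" and L: "0 < L" and large: "4 * c * (1 + a)\<^sup>2 \<le> L"
  shows "0 < \<Lambda> \<and> \<Lambda> \<le> 1"
proof -
  define \<delta> where "\<delta> = 2 * a\<^sup>2 * c / L"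
  have "0 \<le> c * a" "0 \<le> c * a\<^sup>2"
    using a c by simp_all
  moreover have "4 * c * (1 + a)\<^sup>2 = 4 * c + 8 * (c * a) + 4 * (c * a\<^sup>2)"
    by (simp add: power2_sum algebra_simps)
  ultimately have "4 * c * a \<le> L" "4 * c * a\<^sup>2 \<le> L"
    using large c by linarith+
  then have \<delta>: "0 \<le> \<delta>" "\<delta> \<le> a / 2" "\<delta> \<le> 1 / 2"
    using a c L by (simp_all add: \<delta>_def field_simps power2_eq_square)
  have near': "\<bar>\<Lambda> * (1 + a) - a\<bar> \<le> \<delta> * (\<bar>\<Lambda>\<bar> + 1)"
    using near by (simp add: \<delta>_def)
  show ?thesis
  proof
    show "0 < \<Lambda>"
    proof (rule ccontr)
      assume "\<not> 0 < \<Lambda>"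
      then have "a - \<Lambda> * (1 + a) \<le> \<delta> * (1 - \<Lambda>)"
        using near' by (simp add: abs_if split: if_splits)
      then have "a - \<delta> \<le> \<Lambda> * (1 + a - \<delta>)"
        by (simp add: algebra_simps)
      moreover have "\<Lambda> * (1 + a - \<delta>) \<le> 0"
        using \<open>\<not> 0 < \<Lambda>\<close> a \<delta> by (intro mult_nonpos_nonneg) auto
      ultimately show False
        using a \<delta> by linarith
    qed
    show "\<Lambda> \<le> 1"
    proof (rule ccontr)
      assume "\<not> \<Lambda> \<le> 1"
      then have "\<Lambda> * (1 + a) - a \<le> \<delta> * (\<Lambda> + 1)"
        using near' by (simp add: abs_if split: if_splits)
      then have "\<Lambda> * (1 + a - \<delta>) \<le> a + \<delta>"
        by (simp add: algebra_simps)
      moreover have "1 + a - \<delta> < \<Lambda> * (1 + a - \<delta>)"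
        using \<open>\<not> \<Lambda> \<le> 1\<close> a \<delta> mult_strict_right_mono[of 1 \<Lambda> "1 + a - \<delta>"] by simp
      ultimately show False
        using \<delta> by linarith
    qed
  qed
qed

context
  fixes V u :: "real^2 \<Rightarrow> real" and \<tau> \<epsilon> R Vm :: real
  assumes V_nonneg: "\<And>x. 0 \<le> V x" and V_le: "\<And>x. V x \<le> Vm"
    and V_supp: "\<And>x. x \<notin> cball 0 R \<Longrightarrow> V x = 0" and R: "0 \<le> R"
    and V_cont: "continuous_on UNIV V" and V_int: "(\<integral>x. V x \<partial>lborel) = 1"
    and u_cont: "continuous_on UNIV u" and u_sol: "solves_eq V \<tau> \<epsilon> u"
    and \<tau>: "0 < \<tau>" and \<epsilon>: "0 < \<epsilon>" "\<epsilon> < 1"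
begin

private abbreviation "L \<equiv> - ln \<epsilon>"
private abbreviation "a \<equiv> \<tau> / (2 * pi)"
private abbreviation "h \<equiv> rescaled_density V \<epsilon> u"
private abbreviation
  "K \<equiv> \<integral>w. \<bar>indicator (cball (0::real^2) (2 * R)) w * ln (norm w)\<bar> \<partial>lborel"

private lemma L_pos: "0 < L"
  using \<epsilon> by simp

private lemma a_pos: "0 < a"
  using \<tau> by simp

private lemma rescaled_density_eq_L: "h z = V z * (u (\<epsilon> *\<^sub>R z) / L + 1)"
  using \<epsilon> by (simp add: rescaled_density_def)

lemma continuous_on_rescaled_density: "continuous_on UNIV h"
  unfolding rescaled_density_eq_L
  using L_pos by (intro continuous_intros continuous_on_compose2[OF u_cont] V_cont) auto

lemma rescaled_density_outside: "z \<notin> cball 0 R \<Longrightarrow> h z = 0"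
  by (simp add: rescaled_density_eq_L V_supp)

lemma borel_measurable_rescaled_density [measurable]: "h \<in> borel_measurable borel"
  using continuous_on_rescaled_density by (rule borel_measurable_continuous_onI)

lemma integrable_rescaled_density: "integrable lborel h"
proof -
  have "integrable lborel (\<lambda>z. indicator (cball 0 R) z *\<^sub>R h z)"
    by (intro borel_integrable_compact continuous_on_subset[OF continuous_on_rescaled_density]) auto
  also have "(\<lambda>z. indicator (cball 0 R) z *\<^sub>R h z) = h"
    by (auto split: split_indicator simp: rescaled_density_outside)
  finally show ?thesis .
qed

lemma abs_rescaled_density_le:
  assumes "\<And>z. z \<in> cball 0 R \<Longrightarrow> \<bar>u (\<epsilon> *\<^sub>R z)\<bar> \<le> M"
  shows "\<bar>h y\<bar> \<le> Vm * (M / L + 1) * indicator (cball 0 R) y"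
proof (cases "y \<in> cball 0 R")
  case True
  have "\<bar>h y\<bar> \<le> V y * (\<bar>u (\<epsilon> *\<^sub>R y)\<bar> / L + 1)"
    using V_nonneg[of y] L_pos abs_triangle_ineq[of "u (\<epsilon> *\<^sub>R y) / L" 1]
    by (auto simp: rescaled_density_eq_L abs_mult intro!: mult_left_mono)
  also have "\<dots> \<le> Vm * (M / L + 1)"
    using assms[OF True] V_nonneg[of y] V_le[of y] L_pos
    by (intro mult_mono add_right_mono divide_right_mono) auto
  finally show ?thesis
    using True by simp
qed (simp add: rescaled_density_outside)

lemma rescaled_solution_attains_max:
  obtains z0 where "z0 \<in> cball 0 R"
    and "\<And>z. z \<in> cball 0 R \<Longrightarrow> \<bar>u (\<epsilon> *\<^sub>R z)\<bar> \<le> \<bar>u (\<epsilon> *\<^sub>R z0)\<bar>"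
proof -
  have "continuous_on (cball 0 R) (\<lambda>z. \<bar>u (\<epsilon> *\<^sub>R z)\<bar>)"
    by (intro continuous_intros continuous_on_compose2[OF u_cont]) auto
  from continuous_attains_sup[OF compact_cball _ this] R that show ?thesis
    by auto
qed

lemma abs_potential_le:
  assumes u_le: "\<And>z. z \<in> cball 0 R \<Longrightarrow> \<bar>u (\<epsilon> *\<^sub>R z)\<bar> \<le> M" and z: "z \<in> cball 0 R"
  shows "integrable lborel (\<lambda>y. ln (norm (z - y)) * h y)"
    and "\<bar>a * (\<integral>y. ln (norm (z - y)) * h y \<partial>lborel)\<bar> \<le> a * Vm * K * (M / L + 1)"
proof -
  note potential = log_potential_bounded[OF borel_measurable_rescaled_density
      abs_rescaled_density_le[OF u_le]]
  show "integrable lborel (\<lambda>y. ln (norm (z - y)) * h y)"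
    using potential(1) z by simp
  show "\<bar>a * (\<integral>y. ln (norm (z - y)) * h y \<partial>lborel)\<bar> \<le> a * Vm * K * (M / L + 1)"
    using mult_left_mono[OF potential(2)[of z], of a] z \<tau> by (simp add: abs_mult mult_ac)
qed

lemma rescaled_equation:
  assumes "z \<in> cball 0 R"
  shows "u (\<epsilon> *\<^sub>R z)
    = - L * Lambda V \<tau> \<epsilon> u + a * (\<integral>y. ln (norm (z - y)) * h y \<partial>lborel)"
proof -
  obtain z0 where "\<And>z. z \<in> cball 0 R \<Longrightarrow> \<bar>u (\<epsilon> *\<^sub>R z)\<bar> \<le> \<bar>u (\<epsilon> *\<^sub>R z0)\<bar>"
    using rescaled_solution_attains_max by blast
  from abs_potential_le(1)[OF this assms] show ?thesis
    using solves_eq_rescaled[OF u_sol \<epsilon>(1) integrable_rescaled_density] by simp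
qed

private lemma Vm_nonneg: "0 \<le> Vm"
  using V_nonneg V_le order_trans by blast

private lemma K_nonneg: "0 \<le> K"
  by simp

lemma abs_potential_le_Lambda:
  assumes large: "2 * (a * Vm * K) \<le> L" and z: "z \<in> cball 0 R"
  shows "\<bar>a * (\<integral>y. ln (norm (z - y)) * h y \<partial>lborel)\<bar>
    \<le> 2 * (a * Vm * K) * (\<bar>Lambda V \<tau> \<epsilon> u\<bar> + 1)"
proof -
  define C where "C = a * Vm * K"
  define \<Lambda> where "\<Lambda> = Lambda V \<tau> \<epsilon> u"
  define P where "P w = a * (\<integral>y. ln (norm (w - y)) * h y \<partial>lborel)" for w
  (* The equation at a maximum point z0 of |v| bounds M = max |v| by itself with factor C / L,
     which is absorbed since C / L \<le> 1 / 2. *)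
  obtain z0 where z0: "z0 \<in> cball 0 R"
    and max: "\<And>z. z \<in> cball 0 R \<Longrightarrow> \<bar>u (\<epsilon> *\<^sub>R z)\<bar> \<le> \<bar>u (\<epsilon> *\<^sub>R z0)\<bar>"
    using rescaled_solution_attains_max by blast
  define M where "M = \<bar>u (\<epsilon> *\<^sub>R z0)\<bar>"
  have P_le: "\<bar>P w\<bar> \<le> C * (M / L + 1)" if "w \<in> cball 0 R" for w
    unfolding P_def C_def M_def by (rule abs_potential_le(2)[OF max that])
  have C_nonneg: "0 \<le> C"
    using \<tau> Vm_nonneg K_nonneg unfolding C_def by (intro mult_nonneg_nonneg) auto
  have "C \<le> 1 / 2 * L"
    using large unfolding C_def by linarith
  then have C_small: "C / L \<le> 1 / 2"
    using pos_divide_le_eq[OF L_pos] by blast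
  have "u (\<epsilon> *\<^sub>R z0) = - L * \<Lambda> + P z0"
    unfolding P_def \<Lambda>_def by (rule rescaled_equation[OF z0])
  then have "M \<le> L * \<bar>\<Lambda>\<bar> + C * (M / L + 1)"
    using abs_triangle_ineq[of "- L * \<Lambda>" "P z0"] P_le[OF z0] L_pos
    by (simp add: M_def abs_mult)
  then have "M / L \<le> (L * \<bar>\<Lambda>\<bar> + C * (M / L + 1)) / L"
    using L_pos by (intro divide_right_mono) auto
  also have "\<dots> = \<bar>\<Lambda>\<bar> + C / L * (M / L + 1)"
    using L_pos by (simp add: field_simps)
  finally have "M / L \<le> \<bar>\<Lambda>\<bar> + C / L * (M / L + 1)" .
  moreover have "C / L * (M / L + 1) \<le> 1 / 2 * (M / L + 1)"
    using C_small L_pos by (intro mult_right_mono) (auto simp: M_def)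
  ultimately have "M / L + 1 \<le> 2 * (\<bar>\<Lambda>\<bar> + 1)"
    by (simp add: ring_distribs)
  then have "C * (M / L + 1) \<le> 2 * C * (\<bar>\<Lambda>\<bar> + 1)"
    using mult_left_mono[OF _ C_nonneg] by (metis mult.assoc mult.left_commute)
  then show ?thesis
    using P_le[OF z] unfolding P_def C_def \<Lambda>_def by linarith
qed

lemma Lambda_estimate:
  assumes large: "2 * (a * Vm * K) \<le> L"
  shows "\<bar>Lambda V \<tau> \<epsilon> u * (1 + a) - a\<bar>
    \<le> 2 * a\<^sup>2 * Vm * K / L * (\<bar>Lambda V \<tau> \<epsilon> u\<bar> + 1)"
proof -
  define \<Lambda> where "\<Lambda> = Lambda V \<tau> \<epsilon> u"
  define P where "P w = a * (\<integral>y. ln (norm (w - y)) * h y \<partial>lborel)" for w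
  define B where "B = 2 * (a * Vm * K) * (\<bar>\<Lambda>\<bar> + 1)"
  have V_integrable: "integrable lborel V"
    using V_int not_integrable_integral_eq by fastforce
  have defect: "h y - V y + \<Lambda> * V y = V y * (P y / L)" for y
  proof (cases "y \<in> cball 0 R")
    case True
    have "u (\<epsilon> *\<^sub>R y) = - L * \<Lambda> + P y"
      unfolding P_def \<Lambda>_def by (rule rescaled_equation[OF True])
    then show ?thesis
      using L_pos by (simp add: rescaled_density_eq_L field_simps)
  qed (simp add: V_supp rescaled_density_outside)
  have defect_integrable: "integrable lborel (\<lambda>y. V y * (P y / L))"
    unfolding defect[symmetric] using integrable_rescaled_density V_integrable by simp
  have "\<bar>(\<integral>y. h y \<partial>lborel) - 1 + \<Lambda>\<bar> = \<bar>\<integral>y. V y * (P y / L) \<partial>lborel\<bar>"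
    unfolding defect[symmetric] using integrable_rescaled_density V_integrable V_int by simp
  also have "\<dots> \<le> (\<integral>y. V y * (B / L) \<partial>lborel)"
  proof (rule integral_abs_bound_integral[OF defect_integrable])
    show "integrable lborel (\<lambda>y. V y * (B / L))"
      using V_integrable by simp
    show "\<bar>V y * (P y / L)\<bar> \<le> V y * (B / L)" for y
    proof (cases "y \<in> cball 0 R")
      case True
      then have "\<bar>P y\<bar> \<le> B"
        unfolding P_def B_def \<Lambda>_def by (rule abs_potential_le_Lambda[OF large])
      have "\<bar>V y * (P y / L)\<bar> = V y * (\<bar>P y\<bar> / L)"
        using V_nonneg[of y] L_pos by (simp add: abs_mult)
      also have "\<dots> \<le> V y * (B / L)"
        using \<open>\<bar>P y\<bar> \<le> B\<close> V_nonneg[of y] L_pos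
        by (intro mult_left_mono divide_right_mono) auto
      finally show ?thesis .
    qed (simp add: V_supp)
  qed
  also have "\<dots> = B / L"
    using V_int by simp
  finally have "\<bar>(\<integral>y. h y \<partial>lborel) - 1 + \<Lambda>\<bar> \<le> B / L" .
  moreover have "\<Lambda> * (1 + a) - a = a * ((\<integral>y. h y \<partial>lborel) - 1 + \<Lambda>)"
    using Lambda_eq_integral_rescaled_density[of \<epsilon> V \<tau> u] \<epsilon> unfolding \<Lambda>_def
    by (simp add: field_simps)
  ultimately have "\<bar>\<Lambda> * (1 + a) - a\<bar> \<le> a * (B / L)"
    using a_pos mult_left_mono[of _ "B / L" a] by (metis abs_mult abs_of_pos less_imp_le)
  then show ?thesis
    by (simp add: B_def \<Lambda>_def power2_eq_square mult_ac)
qed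

lemma Lambda_in_unit_interval:
  assumes large: "4 * (Vm * K) * (1 + a)\<^sup>2 \<le> L"
  shows "0 < Lambda V \<tau> \<epsilon> u \<and> Lambda V \<tau> \<epsilon> u \<le> 1"
proof (rule pos_le_one_if_near_ratio[OF _ a_pos _ L_pos large])
  have "2 * (\<alpha> * v * k) \<le> 4 * (v * k) * (1 + \<alpha>)\<^sup>2"
    if "0 \<le> v" "0 \<le> k" "0 < \<alpha>" for \<alpha> v k :: real
  proof -
    have "4 * (v * k) * (1 + \<alpha>)\<^sup>2 = 2 * (\<alpha> * v * k) + v * k * (4 + 6 * \<alpha> + 4 * \<alpha>\<^sup>2)"
      by (simp add: power2_sum algebra_simps)
    moreover have "0 \<le> v * k * (4 + 6 * \<alpha> + 4 * \<alpha>\<^sup>2)"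
      using that by simp
    ultimately show ?thesis
      by linarith
  qed
  then have "2 * (a * Vm * K) \<le> L"
    using order_trans[OF _ large] Vm_nonneg K_nonneg a_pos by blast
  then show "\<bar>Lambda V \<tau> \<epsilon> u * (1 + a) - a\<bar>
      \<le> 2 * a\<^sup>2 * (Vm * K) / L * (\<bar>Lambda V \<tau> \<epsilon> u\<bar> + 1)"
    using Lambda_estimate by (simp only: mult.assoc)
qed (use Vm_nonneg K_nonneg in simp)

end

theorem lemma3p1:
  fixes V :: "real^2 \<Rightarrow> real" and \<tau> :: real and u :: "real \<Rightarrow> real^2 \<Rightarrow> real"
  assumes V_nonneg: "\<forall>x. V x \<ge> 0"
    and V_holder: "holder_continuous V"
    and V_supp: "compact_support V"
    and V_int: "(\<integral>x. V x \<partial>lborel) = 1"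
    and tau_pos: "\<tau> > 0"
    and u_sol: "\<forall>\<^sub>F \<epsilon> in at_right 0.
                  admissible (u \<epsilon>) \<and> solves_eq V \<tau> \<epsilon> (u \<epsilon>) \<and>
                  (\<forall>w. admissible w \<and> solves_eq V \<tau> \<epsilon> w \<longrightarrow> w = u \<epsilon>)"
  shows "(\<forall>\<^sub>F \<epsilon> in at_right 0. Lambda V \<tau> \<epsilon> (u \<epsilon>) > 0) \<and>
         Limsup (at_right 0) (\<lambda>\<epsilon>. ereal (Lambda V \<tau> \<epsilon> (u \<epsilon>))) \<le> 1"
proof -
  define a where "a = \<tau> / (2 * pi)"
  have V_cont: "continuous_on UNIV V"
    using V_holder by (rule continuous_on_holder_continuous)
  obtain R where R: "0 < R" and V_outside: "\<And>x. x \<notin> cball 0 R \<Longrightarrow> V x = 0"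
    using compact_support_vanishes_outside_cball[OF V_supp] by blast
  obtain Vm where V_le: "\<And>x. V x \<le> Vm"
    using compact_support_bounded_above[OF V_supp V_cont] by blast
  define K where "K = (\<integral>w. \<bar>indicator (cball (0::real^2) (2 * R)) w * ln (norm w)\<bar> \<partial>lborel)"
  have "\<forall>\<^sub>F \<epsilon> in at_right 0. ln \<epsilon> < - (4 * (Vm * K) * (1 + a)\<^sup>2)"
    using ln_at_0 unfolding filterlim_at_bot_dense by blast
  moreover have "\<forall>\<^sub>F \<epsilon> in at_right 0. 0 < \<epsilon> \<and> \<epsilon> < (1::real)"
    by (simp add: eventually_at_right_less eventually_at_right_field) (auto intro: exI[of _ 1])
  ultimately have
    "\<forall>\<^sub>F \<epsilon> in at_right 0. 0 < Lambda V \<tau> \<epsilon> (u \<epsilon>) \<and> Lambda V \<tau> \<epsilon> (u \<epsilon>) \<le> 1"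
    using u_sol
  proof eventually_elim
    case (elim \<epsilon>)
    then have "continuous_on UNIV (u \<epsilon>)" "solves_eq V \<tau> \<epsilon> (u \<epsilon>)"
      using C2_imp_continuous_on unfolding admissible_def by blast+
    moreover have "4 * (Vm * K) * (1 + a)\<^sup>2 \<le> - ln \<epsilon>"
      using elim by linarith
    ultimately show ?case
      using Lambda_in_unit_interval[of V Vm R "u \<epsilon>" \<tau> \<epsilon>] V_nonneg V_le V_outside R V_cont V_int
        tau_pos elim unfolding a_def K_def by simp
  qed
  then show ?thesis
    by (auto elim: eventually_mono intro!: Limsup_bounded)
qed

end
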